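(* Let $\mathbb{Z}$ be a finite-dimensional Euclidean space, $L>0$, $G:\mathbb{Z}\to\mathbb{Z}$ $\frac1L$-co-coercive with a zero $z^*$ ($G(z^* )=0$). Let $\epsilon\in(0,1]$ and $\gamma_k:=\epsilon/\sqrt{k+1}$ for $k\ge0$. Let $\{z^k\}$ be generated from $z^0\in\mathbb{Z}$ by: for $k\ge 0$, choose $\tilde z^k$ with $\|G(z^k)-\tilde z^k\|\le\gamma_k$ and set $z^{k+1}=\beta_k z^0+(1-\beta_k)z^k-\eta_k\tilde z^k$ with $\beta_k=1/(k+2)$, $\eta_k=(1-\beta_k)/L$. Then $\|G(z^k)\|\le O(k^{-1})+O(\epsilon)$ and $\|z^{k+1}-z^k\|\le O(k^{-1})+O(\epsilon)$ for $k\ge0$; that is, there exist constants $C_1,C_2>0$ independent of $k$ and $\epsilon$ such that $\|G(z^k)\|\le C_1/(k+1)+C_2\epsilon$ and $\|z^{k+1}-z^k\|\le C_1/(k+1)+C_2\epsilon$ for all $k\ge0$.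
   Context: A map $G:\mathbb{Z}\to\mathbb{Z}$ is $c$-co-coercive if $\langle G(x_1)-G(x_2),x_1-x_2\rangle\ge c\|G(x_1)-G(x_2)\|^2$ for all $x_1,x_2$. *)

theory Defs
  imports "HOL-Analysis.Analysis"
begin

definition co_coercive :: "real \<Rightarrow> ('a::real_inner \<Rightarrow> 'a) \<Rightarrow> bool" where
  "co_coercive c G \<longleftrightarrow>
     (\<forall>x1 x2. inner (G x1 - G x2) (x1 - x2) \<ge> c * (norm (G x1 - G x2))\<^sup>2)"

end

theory Submission
  imports Defs
begin

(* With F = G / L (1-co-coercive, i.e. firmly nonexpansive) and d_k = (G z_k - zt_k) / L, the
   scheme is the Halpern iteration z_{k+1} = beta_k z_0 + (1 - beta_k) (z_k - F z_k + d_k) for the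
   nonexpansive map I - F, with errors |d_k| <= eta / sqrt (k + 1), eta = epsilon / L.
   For exact iterates the potential (k + 1) <F z_k, z_k - z_0> + k (k + 1) / 2 |F z_k|^2 is
   nonincreasing; the errors make it grow by at most (k + 2) eta^2 / 2 + (k + 1) eta |F z_k| per step.
   Co-coercivity at z* bounds it below by m^2 |F z_k|^2 / 2 - m |z_0 - z*| |F z_k| with m = k + 1,
   so a strong induction on k yields m |F z_k| <= 2 |z_0 - z*| + 1 + 3 eta m.  Nonexpansiveness of
   I - F gives |z_k - z*| <= |z_0 - z*| + k eta, which bounds the steps
   z_{k+1} - z_k = beta_k (z_0 - z_k) + (1 - beta_k) (d_k - F z_k) at the same rate. *)

lemma co_coercive_scaleR:
  assumes "co_coercive c G" and "a > 0"
  shows "co_coercive (c / a) (\<lambda>x. a *\<^sub>R G x)"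
  unfolding co_coercive_def
proof (intro allI)
  fix x y
  have "c * (norm (G x - G y))\<^sup>2 \<le> inner (G x - G y) (x - y)"
    using assms(1) unfolding co_coercive_def by blast
  moreover have "c / a * (norm (a *\<^sub>R G x - a *\<^sub>R G y))\<^sup>2 = a * (c * (norm (G x - G y))\<^sup>2)"
    using assms(2) by (simp flip: scaleR_diff_right add: power_mult_distrib power2_eq_square)
  moreover have "inner (a *\<^sub>R G x - a *\<^sub>R G y) (x - y) = a * inner (G x - G y) (x - y)"
    by (simp flip: scaleR_diff_right)
  ultimately show "c / a * (norm (a *\<^sub>R G x - a *\<^sub>R G y))\<^sup>2 \<le> inner (a *\<^sub>R G x - a *\<^sub>R G y) (x - y)"
    using assms(2) by simp
qed

lemma co_coercive_one_nonexpansive: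
  assumes "co_coercive 1 F"
  shows "norm ((x - F x) - (y - F y)) \<le> norm (x - y)"
proof -
  have "(norm (F x - F y))\<^sup>2 \<le> inner (F x - F y) (x - y)"
    using assms unfolding co_coercive_def by simp
  moreover have "(norm ((x - y) - (F x - F y)))\<^sup>2
      = (norm (x - y))\<^sup>2 - 2 * inner (F x - F y) (x - y) + (norm (F x - F y))\<^sup>2"
    by (simp add: power2_norm_eq_inner inner_diff inner_commute)
  moreover have "0 \<le> (norm (F x - F y))\<^sup>2"
    by simp
  ultimately have "(norm ((x - y) - (F x - F y)))\<^sup>2 \<le> (norm (x - y))\<^sup>2"
    by linarith
  then show ?thesis
    by (simp add: power2_le_iff_abs_le algebra_simps)
qed

lemma le_of_quadratic_le:
  fixes x D e :: real
  assumes "D \<ge> 0" "e \<ge> 0" and quadratic: "x\<^sup>2 / 2 - D * x \<le> 4 * e\<^sup>2 + (2 * D + 1) * e"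
  shows "x \<le> 2 * D + 1 + 3 * e"
proof (rule ccontr)
  assume "\<not> ?thesis"
  then have "(D + 1 + 3 * e)\<^sup>2 < (x - D)\<^sup>2"
    using assms by (intro power_strict_mono) auto
  moreover have "(x - D)\<^sup>2 = x\<^sup>2 - 2 * (D * x) + D\<^sup>2"
    by (simp add: power2_diff)
  moreover have "(D + 1 + 3 * e)\<^sup>2 = D\<^sup>2 + 2 * D + 1 + 6 * (D * e) + 6 * e + 9 * e\<^sup>2"
    by (simp add: power2_eq_square algebra_simps)
  moreover have "(2 * D + 1) * e = 2 * (D * e) + e"
    by (simp add: algebra_simps)
  moreover have "0 \<le> D * e" "0 \<le> e\<^sup>2"
    using assms by simp_all
  ultimately show False
    using quadratic assms by linarith
qed

(* One step of the potential estimate, with n = k + 1, a = F z_k, b = F z_{k+1},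
   u = z_k - z_0 and u' = z_{k+1} - z_0. *)
lemma halpern_potential_step:
  fixes a b d u u' :: "'a::real_inner" and n :: real
  assumes n: "n > 0" and u': "(n + 1) *\<^sub>R u' = n *\<^sub>R (u - a + d)"
    and coco: "(norm (b - a))\<^sup>2 \<le> inner (b - a) (u' - u)"
  shows "(n + 1) * inner b u' + n * (n + 1) / 2 * (norm b)\<^sup>2
    \<le> n * inner a u + (n - 1) * n / 2 * (norm a)\<^sup>2 + n * (n + 1) / 2 * (norm d)\<^sup>2 + n * inner a d"
proof -
  have "(n + 1) * inner v u' = n * inner v (u - a + d)" for v
    using arg_cong[OF u', of "inner v"] by simp
  then have b_u': "(n + 1) * inner b u' = n * inner b (u - a + d)"
    and ba_u': "(n + 1) * inner (b - a) (u' - u) = n * inner (b - a) (u - a + d) - (n + 1) * inner (b - a) u"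
    by (simp_all only: inner_diff_left inner_diff_right ring_distribs)
  have "n * inner a u + (n - 1) * n / 2 * (norm a)\<^sup>2 + n * (n + 1) / 2 * (norm d)\<^sup>2 + n * inner a d
      - ((n + 1) * inner b u' + n * (n + 1) / 2 * (norm b)\<^sup>2)
    = n * ((n + 1) * inner (b - a) (u' - u) - (n + 1) * (norm (b - a))\<^sup>2)
      + n * (n + 1) / 2 * (norm (a + d - b))\<^sup>2"
    unfolding b_u' ba_u' power2_norm_eq_inner
    by (simp add: inner_simps inner_commute field_simps)
  moreover have "0 \<le> n * ((n + 1) * inner (b - a) (u' - u) - (n + 1) * (norm (b - a))\<^sup>2)"
    using n coco by simp
  moreover have "0 \<le> n * (n + 1) / 2 * (norm (a + d - b))\<^sup>2"
    using n by simp
  ultimately show ?thesis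
    by linarith
qed

locale inexact_halpern =
  fixes F :: "'a::real_inner \<Rightarrow> 'a" and zs z0 :: 'a and z d :: "nat \<Rightarrow> 'a" and \<eta> :: real
  assumes firmly_nonexpansive: "co_coercive 1 F"
    and F_zs: "F zs = 0"
    and err_bound: "\<And>k. norm (d k) \<le> \<eta> / sqrt (real k + 1)"
    and z_0: "z 0 = z0"
    and z_Suc: "\<And>k. z (Suc k) = (1 / (real k + 2)) *\<^sub>R z0
                                  + (1 - 1 / (real k + 2)) *\<^sub>R (z k - F (z k) + d k)"
begin

lemma eta_nonneg: "\<eta> \<ge> 0"
  using order_trans[OF norm_ge_zero err_bound[of 0]] by simp

lemma err_le: "norm (d k) \<le> \<eta>"
proof -
  have "\<eta> / sqrt (real k + 1) \<le> \<eta> / 1"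
    using eta_nonneg by (intro divide_left_mono) auto
  then show ?thesis
    using err_bound[of k] by linarith
qed

lemma err_sq_le: "(norm (d k))\<^sup>2 \<le> \<eta>\<^sup>2 / (real k + 1)"
proof -
  have "(norm (d k))\<^sup>2 \<le> (\<eta> / sqrt (real k + 1))\<^sup>2"
    using err_bound[of k] by (intro power_mono) auto
  then show ?thesis
    by (simp add: power_divide)
qed

lemma z_Suc_minus_z0: "z (Suc k) - z0 = ((real k + 1) / (real k + 2)) *\<^sub>R (z k - z0 - F (z k) + d k)"
proof -
  have "z (Suc k) - z0 = (1 - 1 / (real k + 2)) *\<^sub>R (z k - F (z k) + d k - z0)"
    unfolding z_Suc by (simp add: algebra_simps)
  also have "1 - 1 / (real k + 2) = (real k + 1) / (real k + 2)"
    by (simp add: field_simps)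
  finally show ?thesis
    by (simp add: algebra_simps)
qed

definition potential :: "nat \<Rightarrow> real" where
  "potential k = (real k + 1) * inner (F (z k)) (z k - z0)
                 + real k * (real k + 1) / 2 * (norm (F (z k)))\<^sup>2"

lemma potential_Suc_le:
  "potential (Suc k) \<le> potential k + (real k + 2) / 2 * \<eta>\<^sup>2 + (real k + 1) * \<eta> * norm (F (z k))"
proof -
  define n where "n = real k + 1"
  have n: "n > 0"
    unfolding n_def by simp
  have "(n + 1) * inner (F (z (Suc k))) (z (Suc k) - z0) + n * (n + 1) / 2 * (norm (F (z (Suc k))))\<^sup>2
      \<le> n * inner (F (z k)) (z k - z0) + (n - 1) * n / 2 * (norm (F (z k)))\<^sup>2
         + n * (n + 1) / 2 * (norm (d k))\<^sup>2 + n * inner (F (z k)) (d k)"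
  proof (rule halpern_potential_step[OF n])
    show "(n + 1) *\<^sub>R (z (Suc k) - z0) = n *\<^sub>R (z k - z0 - F (z k) + d k)"
      unfolding z_Suc_minus_z0 n_def by (simp add: add.commute)
    show "(norm (F (z (Suc k)) - F (z k)))\<^sup>2
        \<le> inner (F (z (Suc k)) - F (z k)) ((z (Suc k) - z0) - (z k - z0))"
      using firmly_nonexpansive unfolding co_coercive_def by simp
  qed
  moreover have "n * (n + 1) / 2 * (norm (d k))\<^sup>2 \<le> (real k + 2) / 2 * \<eta>\<^sup>2"
  proof -
    have "n * (n + 1) / 2 * (norm (d k))\<^sup>2 \<le> n * (n + 1) / 2 * (\<eta>\<^sup>2 / n)"
      using err_sq_le[of k] n unfolding n_def by (intro mult_left_mono) auto
    also have "\<dots> = (real k + 2) / 2 * \<eta>\<^sup>2"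
      using n unfolding n_def by (simp add: field_simps)
    finally show ?thesis .
  qed
  moreover have "n * inner (F (z k)) (d k) \<le> n * (\<eta> * norm (F (z k)))"
  proof -
    have "inner (F (z k)) (d k) \<le> norm (F (z k)) * norm (d k)"
      by (rule norm_cauchy_schwarz)
    also have "\<dots> \<le> norm (F (z k)) * \<eta>"
      using err_le[of k] by (intro mult_left_mono) auto
    finally show ?thesis
      using n by (simp add: mult.commute)
  qed
  moreover have "potential (Suc k) = (n + 1) * inner (F (z (Suc k))) (z (Suc k) - z0)
      + n * (n + 1) / 2 * (norm (F (z (Suc k))))\<^sup>2"
    unfolding potential_def n_def by (simp add: add_ac)
  moreover have "potential k = n * inner (F (z k)) (z k - z0) + (n - 1) * n / 2 * (norm (F (z k)))\<^sup>2"
    unfolding potential_def n_def by (simp add: mult.commute)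
  moreover have "(real k + 1) * \<eta> * norm (F (z k)) = n * (\<eta> * norm (F (z k)))"
    unfolding n_def by simp
  ultimately show ?thesis
    by linarith
qed

lemma potential_le_sum:
  "potential k \<le> (\<Sum>j<k. (real j + 2) / 2 * \<eta>\<^sup>2 + (real j + 1) * \<eta> * norm (F (z j)))"
proof (induction k)
  case 0
  then show ?case
    by (simp add: potential_def z_0)
next
  case (Suc k)
  then show ?case
    using potential_Suc_le[of k] by simp
qed

lemma potential_ge:
  "potential k \<ge> ((real k + 1) * norm (F (z k)))\<^sup>2 / 2 - norm (z0 - zs) * ((real k + 1) * norm (F (z k)))"
proof -
  define m f D where "m = real k + 1" and "f = norm (F (z k))" and "D = norm (z0 - zs)"
  have "f\<^sup>2 \<le> inner (F (z k)) (z k - zs)"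
    using firmly_nonexpansive F_zs unfolding co_coercive_def f_def by (metis diff_zero mult_1)
  moreover have "- (f * D) \<le> inner (F (z k)) (zs - z0)"
    using norm_cauchy_schwarz[of "F (z k)" "z0 - zs"] unfolding f_def D_def
    by (simp add: inner_diff_right)
  ultimately have "f\<^sup>2 - f * D \<le> inner (F (z k)) (z k - z0)"
    by (simp add: inner_diff_right)
  then have "m * (f\<^sup>2 - f * D) \<le> m * inner (F (z k)) (z k - z0)"
    unfolding m_def by (intro mult_left_mono) auto
  moreover have "potential k = m * inner (F (z k)) (z k - z0) + (m - 1) * m / 2 * f\<^sup>2"
    unfolding potential_def m_def f_def by simp
  moreover have "m * (f\<^sup>2 - f * D) + (m - 1) * m / 2 * f\<^sup>2 = (m * f)\<^sup>2 / 2 - D * (m * f) + m * f\<^sup>2 / 2"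
    by (simp add: power2_eq_square field_simps)
  moreover have "0 \<le> m * f\<^sup>2 / 2"
    unfolding m_def by simp
  ultimately show ?thesis
    unfolding m_def f_def D_def by linarith
qed

lemma scaled_residual_bound:
  "(real k + 1) * norm (F (z k)) \<le> 2 * norm (z0 - zs) + 1 + 3 * (\<eta> * (real k + 1))"
proof (induction k rule: less_induct)
  case (less k)
  define D m where "D = norm (z0 - zs)" and "m = real k + 1"
  define x e where "x = m * norm (F (z k))" and "e = \<eta> * m"
  have summand_le: "(real j + 2) / 2 * \<eta>\<^sup>2 + (real j + 1) * \<eta> * norm (F (z j))
      \<le> 4 * \<eta>\<^sup>2 * m + (2 * D + 1) * \<eta>" if "j < k" for j
  proof -
    have "real j + 1 \<le> real k" "0 \<le> real j"
      using that by (simp_all add: Suc_le_eq flip: of_nat_Suc)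
    then have "(real j + 2) / 2 + 3 * (real j + 1) \<le> 4 * m"
      unfolding m_def by (simp add: field_simps)
    then have "((real j + 2) / 2 + 3 * (real j + 1)) * \<eta>\<^sup>2 \<le> (4 * m) * \<eta>\<^sup>2"
      by (rule mult_right_mono) simp
    then have "(real j + 2) / 2 * \<eta>\<^sup>2 + 3 * \<eta>\<^sup>2 * (real j + 1) \<le> 4 * \<eta>\<^sup>2 * m"
      by (simp add: algebra_simps)
    moreover have "(real j + 1) * \<eta> * norm (F (z j)) \<le> (2 * D + 1) * \<eta> + 3 * \<eta>\<^sup>2 * (real j + 1)"
      using mult_left_mono[OF less.IH[OF that] eta_nonneg] unfolding D_def
      by (simp add: algebra_simps power2_eq_square)
    ultimately show ?thesis
      by linarith
  qed
  have "x\<^sup>2 / 2 - D * x \<le> potential k"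
    using potential_ge[of k] unfolding x_def D_def m_def .
  also have "\<dots> \<le> (\<Sum>j<k. (real j + 2) / 2 * \<eta>\<^sup>2 + (real j + 1) * \<eta> * norm (F (z j)))"
    by (rule potential_le_sum)
  also have "\<dots> \<le> real k * (4 * \<eta>\<^sup>2 * m + (2 * D + 1) * \<eta>)"
    using sum_bounded_above[of "{..<k}", OF summand_le] by simp
  also have "\<dots> \<le> m * (4 * \<eta>\<^sup>2 * m + (2 * D + 1) * \<eta>)"
    unfolding m_def D_def using eta_nonneg by (intro mult_right_mono) auto
  also have "\<dots> = 4 * e\<^sup>2 + (2 * D + 1) * e"
    unfolding e_def by (simp add: power2_eq_square algebra_simps)
  finally have "x \<le> 2 * D + 1 + 3 * e"
    by (rule le_of_quadratic_le[rotated 2]) (use eta_nonneg in \<open>simp_all add: D_def e_def m_def\<close>)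
  then show ?case
    unfolding x_def e_def D_def m_def .
qed

lemma residual_bound: "norm (F (z k)) \<le> (2 * norm (z0 - zs) + 1) / (real k + 1) + 3 * \<eta>"
proof -
  have "norm (F (z k)) = (real k + 1) * norm (F (z k)) / (real k + 1)"
    by simp
  also have "\<dots> \<le> (2 * norm (z0 - zs) + 1 + 3 * (\<eta> * (real k + 1))) / (real k + 1)"
    using scaled_residual_bound by (intro divide_right_mono) auto
  also have "\<dots> = (2 * norm (z0 - zs) + 1) / (real k + 1) + 3 * \<eta>"
    by (simp add: add_divide_distrib)
  finally show ?thesis .
qed

lemma dist_fixed_point_le: "norm (z k - zs) \<le> norm (z0 - zs) + \<eta> * real k"
proof (induction k)
  case 0
  then show ?case
    by (simp add: z_0)
next
  case (Suc k)
  define \<beta> where "\<beta> = 1 / (real k + 2)"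
  have \<beta>: "0 \<le> \<beta>" "0 \<le> 1 - \<beta>"
    unfolding \<beta>_def by simp_all
  have "z (Suc k) - zs = \<beta> *\<^sub>R (z0 - zs) + (1 - \<beta>) *\<^sub>R ((z k - F (z k)) - (zs - F zs) + d k)"
    unfolding z_Suc \<beta>_def[symmetric] F_zs by (simp add: algebra_simps)
  then have "norm (z (Suc k) - zs)
      \<le> norm (\<beta> *\<^sub>R (z0 - zs)) + norm ((1 - \<beta>) *\<^sub>R ((z k - F (z k)) - (zs - F zs) + d k))"
    by (simp only: norm_triangle_ineq)
  also have "\<dots> = \<beta> * norm (z0 - zs) + (1 - \<beta>) * norm ((z k - F (z k)) - (zs - F zs) + d k)"
    using \<beta> by simp
  also have "\<dots> \<le> \<beta> * norm (z0 - zs) + (1 - \<beta>) * (norm (z0 - zs) + \<eta> * real k + \<eta>)"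
  proof -
    have "norm ((z k - F (z k)) - (zs - F zs) + d k) \<le> norm (z k - zs) + norm (d k)"
      using norm_triangle_ineq[of "(z k - F (z k)) - (zs - F zs)" "d k"]
        co_coercive_one_nonexpansive[OF firmly_nonexpansive, of "z k" zs] by linarith
    then show ?thesis
      using Suc.IH err_le[of k] \<beta> by (intro add_left_mono mult_left_mono) auto
  qed
  also have "\<dots> = norm (z0 - zs) + \<eta> * real (Suc k) - \<beta> * (\<eta> * real (Suc k))"
    by (simp add: algebra_simps)
  also have "\<dots> \<le> norm (z0 - zs) + \<eta> * real (Suc k)"
    using \<beta> eta_nonneg by simp
  finally show ?case .
qed

lemma step_bound:
  "norm (z (Suc k) - z k) \<le> 2 * (2 * norm (z0 - zs) + 1) / (real k + 1) + 5 * \<eta>"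
proof -
  define D \<beta> where "D = norm (z0 - zs)" and "\<beta> = 1 / (real k + 2)"
  have \<beta>: "0 \<le> \<beta>" "0 \<le> 1 - \<beta>"
    unfolding \<beta>_def by simp_all
  have "z (Suc k) - z k = \<beta> *\<^sub>R (z0 - z k) + (1 - \<beta>) *\<^sub>R (d k - F (z k))"
    unfolding z_Suc \<beta>_def[symmetric] by (simp add: algebra_simps)
  then have "norm (z (Suc k) - z k) \<le> norm (\<beta> *\<^sub>R (z0 - z k)) + norm ((1 - \<beta>) *\<^sub>R (d k - F (z k)))"
    by (simp only: norm_triangle_ineq)
  also have "\<dots> = \<beta> * norm (z0 - z k) + (1 - \<beta>) * norm (d k - F (z k))"
    using \<beta> by simp
  finally have "norm (z (Suc k) - z k) \<le> \<beta> * norm (z0 - z k) + (1 - \<beta>) * norm (d k - F (z k))" .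
  moreover have "\<beta> * norm (z0 - z k) \<le> \<beta> * (2 * D) + \<beta> * (\<eta> * real k)"
  proof -
    have "norm (z0 - z k) \<le> 2 * D + \<eta> * real k"
      using norm_triangle_ineq[of "z0 - zs" "zs - z k"] dist_fixed_point_le[of k]
      unfolding D_def by (simp add: norm_minus_commute)
    then show ?thesis
      using \<beta> by (simp add: mult_left_mono flip: distrib_left)
  qed
  moreover have "(1 - \<beta>) * norm (d k - F (z k)) \<le> \<eta> + norm (F (z k))"
  proof -
    have "(1 - \<beta>) * norm (d k - F (z k)) \<le> norm (d k - F (z k))"
      using \<beta> by (simp add: mult_left_le_one_le)
    then show ?thesis
      using norm_triangle_ineq4[of "d k" "F (z k)"] err_le[of k] by linarith
  qed
  moreover have "\<beta> * (2 * D) \<le> (2 * D + 1) / (real k + 1)"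
    unfolding \<beta>_def D_def by (simp add: frac_le)
  moreover have "\<beta> * (\<eta> * real k) \<le> \<eta>"
    unfolding \<beta>_def using eta_nonneg by (simp add: divide_le_eq mult_left_mono)
  moreover have "2 * (2 * D + 1) / (real k + 1) = 2 * ((2 * D + 1) / (real k + 1))"
    by simp
  ultimately show ?thesis
    using residual_bound[of k, folded D_def] unfolding D_def[symmetric] by linarith
qed

end

lemma inexact_halpern_scaled:
  fixes G :: "'a::real_inner \<Rightarrow> 'a"
  assumes L: "L > 0" and coco: "co_coercive (1 / L) G" and zero: "G zs = 0"
    and approx: "\<And>k. norm (G (z k) - zt k) \<le> \<epsilon> / sqrt (real k + 1)"
    and z_0: "z 0 = z0"
    and z_Suc: "\<And>k. z (Suc k) = (1 / (real k + 2)) *\<^sub>R z0 + (1 - 1 / (real k + 2)) *\<^sub>R z k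
                                  - ((1 - 1 / (real k + 2)) / L) *\<^sub>R zt k"
  shows "inexact_halpern (\<lambda>x. (1 / L) *\<^sub>R G x) zs z0 z (\<lambda>k. (1 / L) *\<^sub>R (G (z k) - zt k)) (\<epsilon> / L)"
proof
  show "co_coercive 1 (\<lambda>x. (1 / L) *\<^sub>R G x)"
    using co_coercive_scaleR[OF coco, of "1 / L"] L by simp
  show "(1 / L) *\<^sub>R G zs = 0"
    using zero by simp
  show "norm ((1 / L) *\<^sub>R (G (z k) - zt k)) \<le> \<epsilon> / L / sqrt (real k + 1)" for k
    using divide_right_mono[OF approx[of k], of L] L by (simp add: divide_inverse_commute)
  show "z 0 = z0"
    by (rule z_0)
  show "z (Suc k) = (1 / (real k + 2)) *\<^sub>R z0
      + (1 - 1 / (real k + 2)) *\<^sub>R (z k - (1 / L) *\<^sub>R G (z k) + (1 / L) *\<^sub>R (G (z k) - zt k))" for k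
  proof -
    have "z k - (1 / L) *\<^sub>R G (z k) + (1 / L) *\<^sub>R (G (z k) - zt k) = z k - (1 / L) *\<^sub>R zt k"
      by (simp add: algebra_simps)
    then show ?thesis
      unfolding z_Suc by (simp add: scaleR_diff_right)
  qed
qed

theorem corollary2:
  fixes G :: "'a::euclidean_space \<Rightarrow> 'a" and L :: real and zstar z0 :: 'a
  assumes L: "L > 0"
    and coco: "co_coercive (1 / L) G"
    and zero: "G zstar = 0"
  shows "\<exists>C1 C2. C1 > 0 \<and> C2 > 0 \<and>
    (\<forall>(\<epsilon>::real) (z :: nat \<Rightarrow> 'a) (zt :: nat \<Rightarrow> 'a).
       0 < \<epsilon> \<and> \<epsilon> \<le> 1 \<and> z 0 = z0 \<and>
       (\<forall>k. norm (G (z k) - zt k) \<le> \<epsilon> / sqrt (real k + 1)) \<and>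
       (\<forall>k. z (Suc k) = (1 / (real k + 2)) *\<^sub>R z0 + (1 - 1 / (real k + 2)) *\<^sub>R z k
                        - ((1 - 1 / (real k + 2)) / L) *\<^sub>R zt k)
       \<longrightarrow> (\<forall>k. norm (G (z k)) \<le> C1 / (real k + 1) + C2 * \<epsilon> \<and>
                norm (z (Suc k) - z k) \<le> C1 / (real k + 1) + C2 * \<epsilon>))"
proof -
  define A where "A = 2 * norm (z0 - zstar) + 1"
  have A: "A > 0"
    unfolding A_def by (simp add: add_nonneg_pos)
  show ?thesis
  proof (intro exI conjI allI impI)
    show "(L + 2) * A > 0" "3 + 5 / L > 0"
      using L A by (simp_all add: add_pos_pos)
    fix \<epsilon> :: real and z zt :: "nat \<Rightarrow> 'a" and k :: nat
    assume H: "0 < \<epsilon> \<and> \<epsilon> \<le> 1 \<and> z 0 = z0 \<and>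
       (\<forall>k. norm (G (z k) - zt k) \<le> \<epsilon> / sqrt (real k + 1)) \<and>
       (\<forall>k. z (Suc k) = (1 / (real k + 2)) *\<^sub>R z0 + (1 - 1 / (real k + 2)) *\<^sub>R z k
                        - ((1 - 1 / (real k + 2)) / L) *\<^sub>R zt k)"
    interpret inexact_halpern "\<lambda>x. (1 / L) *\<^sub>R G x" zstar z0 z "\<lambda>k. (1 / L) *\<^sub>R (G (z k) - zt k)" "\<epsilon> / L"
      using inexact_halpern_scaled[OF L coco zero] H by blast
    define m where "m = real k + 1"
    have "norm (G (z k)) = L * norm ((1 / L) *\<^sub>R G (z k))"
      using L by simp
    also have "\<dots> \<le> L * (A / m + 3 * (\<epsilon> / L))"
      using residual_bound[of k] L unfolding A_def m_def by (intro mult_left_mono) auto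
    also have "\<dots> = L * (A / m) + 3 * \<epsilon>"
      using L by (simp add: distrib_left)
    finally have "norm (G (z k)) \<le> L * (A / m) + 3 * \<epsilon>" .
    moreover have "norm (z (Suc k) - z k) \<le> 2 * (A / m) + 5 * (\<epsilon> / L)"
      using step_bound[of k] unfolding A_def[symmetric] m_def[symmetric] by simp
    moreover have "0 \<le> A / m" "0 \<le> \<epsilon> / L"
      using A L H unfolding m_def by simp_all
    moreover have "0 \<le> L * (A / m)"
      using L A unfolding m_def by simp
    moreover have "(L + 2) * A / m = L * (A / m) + 2 * (A / m)" "(3 + 5 / L) * \<epsilon> = 3 * \<epsilon> + 5 * (\<epsilon> / L)"
      by (simp_all add: distrib_right add_divide_distrib)
    ultimately show "norm (G (z k)) \<le> (L + 2) * A / (real k + 1) + (3 + 5 / L) * \<epsilon>"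
      and "norm (z (Suc k) - z k) \<le> (L + 2) * A / (real k + 1) + (3 + 5 / L) * \<epsilon>"
      using H unfolding m_def by linarith+
  qed
qed

end
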